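(* Let $t\in\mathbb{R}$, $\mu>0$, $\sigma>0$, $\lambda>0$ with $\lambda\ge(\mu-t)_-$. Let $\mathcal{L}_{S,\lambda}(\mu,\sigma)$ be the set of probability distributions $F$ on $\mathbb{R}$ such that, for $X\sim F$, $\mathbb{E}^F[X]=\mu$, $\mathbb{E}^F[X^2]=\mu^2+\sigma^2$, $F$ is symmetric, and $\mathbb{E}^F[(X-t)_-]\le\lambda$. Then $\mathcal{L}_{S,\lambda}(\mu,\sigma)$ is non-empty if and only if either $\lambda>(\mu-t)_-$, or $\lambda=(\mu-t)_-$ and $\sigma\le t-\mu$.
   Context: For $x\in\mathbb{R}$, $(x)_-=\max\{-x,0\}$. A distribution $F$ of a random variable $X$ is called symmetric if there exists $a\in\mathbb{R}$ with $\mathbb{P}(X-a>x)=\mathbb{P}(X-a<-x)$ for all $x\in\mathbb{R}$ under $F$. *)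

theory Defs
  imports "HOL-Probability.Probability"
begin

definition neg_part :: "real \<Rightarrow> real" where
  "neg_part x = max (- x) 0"

definition symmetric_distr :: "real measure \<Rightarrow> bool" where
  "symmetric_distr F \<longleftrightarrow>
     (\<exists>a. \<forall>x. measure F {y. y - a > x} = measure F {y. y - a < - x})"

definition L_S :: "real \<Rightarrow> real \<Rightarrow> real \<Rightarrow> real \<Rightarrow> real measure set" where
  "L_S t lam mu sig =
     {F. prob_space F \<and> sets F = sets borel \<and>
         integrable F (\<lambda>x. x) \<and> (\<integral>x. x \<partial>F) = mu \<and>
         integrable F (\<lambda>x. x ^ 2) \<and> (\<integral>x. x ^ 2 \<partial>F) = mu ^ 2 + sig ^ 2 \<and>
         symmetric_distr F \<and>
         integrable F (\<lambda>x. neg_part (x - t)) \<and> (\<integral>x. neg_part (x - t) \<partial>F) \<le> lam}"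

end

theory Submission
  imports Defs
begin

text \<open>
  Sufficiency: the symmetric three-point law with mass \<open>p/2\<close> at \<open>\<mu> \<plusminus> d\<close> and \<open>1 - p\<close>
  at \<open>\<mu>\<close>, where \<open>p d\<^sup>2 = \<sigma>\<^sup>2\<close>, has the prescribed mean and variance. For \<open>d \<ge> \<bar>t - \<mu>\<bar>\<close>
  its expected shortfall \<open>E[(X - t)\<^sub>-]\<close> is \<open>p (t - \<mu> + d)/2 + (1 - p) (\<mu> - t)\<^sub>-\<close>, at most
  \<open>(\<mu> - t)\<^sub>- + \<sigma>\<^sup>2/d\<close>; so a large \<open>d\<close> works whenever \<open>\<lambda> > (\<mu> - t)\<^sub>-\<close>, and \<open>d = \<sigma>\<close>, \<open>p = 1\<close>
  works when \<open>\<lambda> = t - \<mu> \<ge> \<sigma>\<close>.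

  Necessity in the tight case \<open>\<lambda> = (\<mu> - t)\<^sub>- = t - \<mu>\<close>: then
  \<open>E[(X - t)\<^sub>+] = E[(X - t)\<^sub>-] + \<mu> - t \<le> 0\<close>, so \<open>X \<le> t\<close> almost surely. The centre of symmetry
  must be the mean \<open>\<mu>\<close>, so reflecting gives \<open>X \<ge> 2\<mu> - t\<close> almost surely, and the
  Bhatia--Davis inequality \<open>\<sigma>\<^sup>2 \<le> (t - \<mu>) (\<mu> - (2\<mu> - t))\<close> yields \<open>\<sigma> \<le> t - \<mu>\<close>.
\<close>

lemma neg_part_eq_max: "neg_part x = max x 0 - x"
  by (simp add: neg_part_def max_def)

definition three_point_distr :: "real \<Rightarrow> real \<Rightarrow> real \<Rightarrow> real measure" where
  "three_point_distr mu d p =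
     distr (measure_pmf (pmf_of_list [(mu - d, p / 2), (mu, 1 - p), (mu + d, p / 2)])) borel (\<lambda>x. x)"

lemma sets_three_point_distr: "sets (three_point_distr mu d p) = sets borel"
  by (simp add: three_point_distr_def)

lemma prob_space_three_point_distr: "prob_space (three_point_distr mu d p)"
  unfolding three_point_distr_def by (rule measure_pmf.prob_space_distr) simp

context
  fixes mu d p :: real
  assumes d: "d > 0" and p: "0 \<le> p" "p \<le> 1"
begin

private abbreviation "xs \<equiv> [(mu - d, p / 2), (mu, 1 - p), (mu + d, p / 2)]"

private lemma wf_three_point: "pmf_of_list_wf xs"
  using p by (intro pmf_of_list_wfI) auto

lemma integrable_three_point_distr:
  fixes g :: "real \<Rightarrow> real"
  assumes "g \<in> borel_measurable borel"
  shows "integrable (three_point_distr mu d p) g"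
  unfolding three_point_distr_def using assms finite_set_pmf_of_list[OF wf_three_point]
  by (simp add: integrable_distr_eq integrable_measure_pmf_finite)

lemma integral_three_point_distr:
  assumes "g \<in> borel_measurable borel"
  shows "(\<integral>x. g x \<partial>three_point_distr mu d p)
           = p / 2 * g (mu - d) + (1 - p) * g mu + p / 2 * g (mu + d)"
proof -
  have "(\<integral>x. g x \<partial>three_point_distr mu d p) = (\<integral>x. g x \<partial>measure_pmf (pmf_of_list xs))"
    unfolding three_point_distr_def using assms by (simp add: integral_distr)
  also have "\<dots> = (\<Sum>a\<in>{mu - d, mu, mu + d}. g a * pmf (pmf_of_list xs) a)"
    using set_pmf_of_list[OF wf_three_point] by (intro integral_measure_pmf_real) auto
  also have "\<dots> = p / 2 * g (mu - d) + (1 - p) * g mu + p / 2 * g (mu + d)"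
    using d by (simp add: pmf_pmf_of_list[OF wf_three_point] mult_ac)
  finally show ?thesis .
qed

lemma symmetric_three_point_distr: "symmetric_distr (three_point_distr mu d p)"
  unfolding symmetric_distr_def
proof (intro exI allI)
  fix x
  have "measure (three_point_distr mu d p) A = (\<Sum>y\<leftarrow>filter (\<lambda>y. fst y \<in> A) xs. snd y)"
    if "A \<in> sets borel" for A
    unfolding three_point_distr_def using that
    by (simp add: measure_distr measure_pmf_of_list[OF wf_three_point])
  then show "measure (three_point_distr mu d p) {y. y - mu > x} =
             measure (three_point_distr mu d p) {y. y - mu < - x}"
    using d by auto
qed

end

lemma three_point_distr_in_L_S:
  assumes "d > 0" "0 \<le> p" "p \<le> 1" "p * d\<^sup>2 = sig\<^sup>2"
    and "p / 2 * neg_part (mu - d - t) + (1 - p) * neg_part (mu - t) + p / 2 * neg_part (mu + d - t) \<le> lam"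
  shows "three_point_distr mu d p \<in> L_S t lam mu sig"
proof -
  have neg_part_measurable: "(\<lambda>x. neg_part (x - t)) \<in> borel_measurable borel"
    by (simp add: neg_part_def)
  note integral = integral_three_point_distr[OF assms(1-3)]
  have "(\<integral>x. x \<partial>three_point_distr mu d p) = mu"
    by (simp add: integral[of "\<lambda>x. x"] field_simps)
  moreover have "(\<integral>x. x\<^sup>2 \<partial>three_point_distr mu d p) = mu\<^sup>2 + sig\<^sup>2"
    using assms(4) by (subst integral) (simp_all add: field_simps power2_eq_square)
  ultimately show ?thesis
    unfolding L_S_def using assms
    by (auto intro!: prob_space_three_point_distr symmetric_three_point_distr
        integrable_three_point_distr simp: sets_three_point_distr neg_part_measurable integral[OF neg_part_measurable])
qed

lemma L_S_nonempty_if_slack: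
  assumes sig: "sig > 0" and slack: "lam > neg_part (mu - t)"
  shows "L_S t lam mu sig \<noteq> {}"
proof -
  define gap where "gap = lam - neg_part (mu - t)"
  define d where "d = max (max sig \<bar>t - mu\<bar>) (2 * sig\<^sup>2 / gap)"
  define p where "p = sig\<^sup>2 / d\<^sup>2"
  have gap: "gap > 0" using slack by (simp add: gap_def)
  have d: "d > 0" "sig \<le> d" "\<bar>t - mu\<bar> \<le> d" "2 * sig\<^sup>2 / gap \<le> d"
    using sig by (auto simp: d_def)
  have "p \<ge> 0" "p \<le> 1" using d sig by (simp_all add: p_def power_mono)
  have p_d: "p * d\<^sup>2 = sig\<^sup>2" using d by (simp add: p_def)
  have "p / 2 * neg_part (mu - d - t) + (1 - p) * neg_part (mu - t) + p / 2 * neg_part (mu + d - t)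
      = p / 2 * (t - mu + d) + (1 - p) * neg_part (mu - t)"
    using d by (simp add: neg_part_def)
  also have "\<dots> \<le> p * d + neg_part (mu - t)"
  proof (rule add_mono)
    show "p / 2 * (t - mu + d) \<le> p * d"
      using mult_left_mono[of "t - mu + d" "2 * d" p] d(3) \<open>p \<ge> 0\<close> by (simp add: abs_le_iff)
    show "(1 - p) * neg_part (mu - t) \<le> neg_part (mu - t)"
      using \<open>p \<ge> 0\<close> by (simp add: algebra_simps neg_part_def)
  qed
  also have "p * d = sig\<^sup>2 / d"
    using d by (simp add: p_def power2_eq_square)
  also have "sig\<^sup>2 / d < gap"
  proof -
    have "2 * sig\<^sup>2 \<le> d * gap" using d(4) gap by (simp add: divide_le_eq)
    moreover have "sig\<^sup>2 > 0" using sig by simp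
    ultimately have "sig\<^sup>2 < d * gap" by linarith
    with d(1) show ?thesis by (simp add: pos_divide_less_eq mult.commute)
  qed
  finally have "p / 2 * neg_part (mu - d - t) + (1 - p) * neg_part (mu - t)
      + p / 2 * neg_part (mu + d - t) \<le> lam"
    by (simp add: gap_def)
  with three_point_distr_in_L_S[OF d(1) _ \<open>p \<le> 1\<close> p_d] show ?thesis
    by (auto simp: p_def)
qed

lemma L_S_nonempty_if_tight:
  assumes "0 < sig" "sig \<le> t - mu"
  shows "L_S t (t - mu) mu sig \<noteq> {}"
  using three_point_distr_in_L_S[of sig 1 sig mu t "t - mu"] assms
  by (auto simp: neg_part_def field_simps)

lemma (in prob_space) AE_le_if_integral_neg_part_le:
  fixes X :: "'a \<Rightarrow> real"
  assumes X: "integrable M X" and neg: "integrable M (\<lambda>x. neg_part (X x - t))"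
    and le: "(\<integral>x. neg_part (X x - t) \<partial>M) \<le> t - (\<integral>x. X x \<partial>M)"
  shows "AE x in M. X x \<le> t"
proof -
  have pos_part: "(\<lambda>x. max (X x - t) 0) = (\<lambda>x. neg_part (X x - t) + (X x - t))"
    by (simp add: neg_part_eq_max)
  have int: "integrable M (\<lambda>x. max (X x - t) 0)"
    unfolding pos_part using X neg by simp
  have "(\<integral>x. max (X x - t) 0 \<partial>M) = (\<integral>x. neg_part (X x - t) \<partial>M) + ((\<integral>x. X x \<partial>M) - t)"
    unfolding pos_part using X neg by (simp add: prob_space)
  also have "\<dots> \<le> 0" using le by simp
  finally have "(\<integral>x. max (X x - t) 0 \<partial>M) = 0"
    by (simp add: antisym integral_nonneg_AE)
  then have "AE x in M. max (X x - t) 0 = 0"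
    using integral_nonneg_eq_0_iff_AE[OF int] by simp
  then show ?thesis by (auto elim!: AE_mp)
qed

lemma distr_reflection_eq_if_symmetric:
  fixes F :: "real measure"
  assumes "finite_measure F" and sets_F: "sets F = sets borel"
    and symm: "\<And>x. measure F {y. y - a > x} = measure F {y. y - a < - x}"
  shows "distr F borel (\<lambda>y. 2 * a - y) = F"
proof (rule measure_eqI_lessThan)
  interpret finite_measure F by fact
  have space_F: "space F = UNIV"
    using sets_eq_imp_space_eq[OF sets_F] by simp
  show "sets (distr F borel (\<lambda>y. 2 * a - y)) = sets borel" "sets F = sets borel"
    using sets_F by simp_all
  show "emeasure (distr F borel (\<lambda>y. 2 * a - y)) {x<..} < \<infinity>" for x
    by (simp add: emeasure_distr measurable_cong_sets[OF sets_F refl] less_top[symmetric])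
  show "emeasure (distr F borel (\<lambda>y. 2 * a - y)) {x<..} = emeasure F {x<..}" for x
  proof -
    have "emeasure (distr F borel (\<lambda>y. 2 * a - y)) {x<..} = emeasure F {y. y < 2 * a - x}"
      using space_F
      by (subst emeasure_distr)
        (auto simp: measurable_cong_sets[OF sets_F refl] intro!: arg_cong[where f = "emeasure F"])
    also have "\<dots> = emeasure F {y. y > x}"
      using symm[of "x - a"] sets_F by (simp add: emeasure_eq_measure algebra_simps)
    finally show ?thesis by (simp add: greaterThan_def)
  qed
qed

lemma centre_eq_mean_if_symmetric:
  fixes F :: "real measure"
  assumes "prob_space F" and sets_F: "sets F = sets borel" and int: "integrable F (\<lambda>x. x)"
    and symm: "\<And>x. measure F {y. y - a > x} = measure F {y. y - a < - x}"
  shows "a = (\<integral>x. x \<partial>F)"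
proof -
  interpret prob_space F by fact
  have reflect: "(\<lambda>y. 2 * a - y) \<in> borel_measurable F"
    by (simp add: measurable_cong_sets[OF sets_F refl])
  have "(\<integral>x. x \<partial>F) = (\<integral>x. x \<partial>distr F borel (\<lambda>y. 2 * a - y))"
    using distr_reflection_eq_if_symmetric[OF finite_measure_axioms sets_F symm]
    by (rule sym [THEN arg_cong])
  also have "\<dots> = (\<integral>y. 2 * a - y \<partial>F)"
    by (rule integral_distr[OF reflect]) simp
  also have "\<dots> = 2 * a - (\<integral>x. x \<partial>F)"
    using int by (simp add: Bochner_Integration.integral_diff prob_space)
  finally show ?thesis by simp
qed

lemma (in prob_space) Bhatia_Davis_inequality:
  fixes X :: "'a \<Rightarrow> real"
  assumes X: "integrable M X" and X2: "integrable M (\<lambda>x. (X x)\<^sup>2)"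
    and bounds: "AE x in M. c \<le> X x \<and> X x \<le> b"
  shows "(\<integral>x. (X x)\<^sup>2 \<partial>M) - (\<integral>x. X x \<partial>M)\<^sup>2
           \<le> (b - (\<integral>x. X x \<partial>M)) * ((\<integral>x. X x \<partial>M) - c)"
proof -
  have expand: "(X x - c) * (b - X x) = (b + c) * X x - (X x)\<^sup>2 - b * c" for x
    by (simp add: algebra_simps power2_eq_square)
  have "0 \<le> (\<integral>x. (X x - c) * (b - X x) \<partial>M)"
    using bounds by (intro integral_nonneg_AE) (auto elim!: AE_mp)
  also have "\<dots> = (b + c) * (\<integral>x. X x \<partial>M) - (\<integral>x. (X x)\<^sup>2 \<partial>M) - b * c"
    unfolding expand using X X2 by (simp add: prob_space)
  finally show ?thesis by (simp add: algebra_simps power2_eq_square)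
qed

lemma L_S_tight_imp_sig_le:
  assumes "F \<in> L_S t (t - mu) mu sig"
  shows "sig \<le> t - mu"
proof -
  from assms have "prob_space F" and sets_F: "sets F = sets borel"
    and int: "integrable F (\<lambda>x. x)" and mean: "(\<integral>x. x \<partial>F) = mu"
    and int2: "integrable F (\<lambda>x. x\<^sup>2)" and moment2: "(\<integral>x. x\<^sup>2 \<partial>F) = mu\<^sup>2 + sig\<^sup>2"
    and "symmetric_distr F"
    and int_neg: "integrable F (\<lambda>x. neg_part (x - t))"
    and neg: "(\<integral>x. neg_part (x - t) \<partial>F) \<le> t - mu"
    unfolding L_S_def by auto
  interpret prob_space F by fact
  from \<open>symmetric_distr F\<close> obtain a
    where symm: "\<And>x. measure F {y. y - a > x} = measure F {y. y - a < - x}"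
    unfolding symmetric_distr_def by blast
  have "a = mu"
    using centre_eq_mean_if_symmetric[OF prob_space_axioms sets_F int symm] mean by simp
  have upper: "AE x in F. x \<le> t"
    using AE_le_if_integral_neg_part_le[OF int int_neg] neg mean by simp
  have reflect: "distr F borel (\<lambda>y. 2 * a - y) = F"
    by (rule distr_reflection_eq_if_symmetric[OF finite_measure_axioms sets_F symm])
  have "AE x in distr F borel (\<lambda>y. 2 * a - y). x \<le> t"
    using upper unfolding reflect .
  then have lower: "AE x in F. 2 * mu - t \<le> x"
    using \<open>a = mu\<close> by (subst (asm) AE_distr_iff) (auto simp: measurable_cong_sets[OF sets_F refl] sets_F)
  have "sig\<^sup>2 \<le> (t - mu)\<^sup>2"
    using Bhatia_Davis_inequality[OF int int2, of "2 * mu - t" t] upper lower mean moment2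
    by (simp add: power2_eq_square algebra_simps)
  moreover have "0 \<le> t - mu"
  proof -
    have "0 \<le> (\<integral>x. neg_part (x - t) \<partial>F)" by (simp add: neg_part_def)
    with neg show ?thesis by linarith
  qed
  ultimately show ?thesis by (rule power2_le_imp_le)
qed

theorem proposition4:
  fixes t mu sig lam :: real
  assumes "mu > 0" and "sig > 0" and "lam > 0"
    and "lam \<ge> neg_part (mu - t)"
  shows "L_S t lam mu sig \<noteq> {} \<longleftrightarrow>
           (lam > neg_part (mu - t) \<or> (lam = neg_part (mu - t) \<and> sig \<le> t - mu))"
proof (cases "lam > neg_part (mu - t)")
  case True
  then show ?thesis using L_S_nonempty_if_slack[OF \<open>sig > 0\<close>] by simp
next
  case False
  with assms(3,4) have tight: "lam = neg_part (mu - t)" "lam = t - mu"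
    by (auto simp: neg_part_def)
  have "L_S t lam mu sig \<noteq> {} \<longleftrightarrow> sig \<le> t - mu"
    using L_S_tight_imp_sig_le L_S_nonempty_if_tight[OF \<open>sig > 0\<close>] unfolding tight(2) by blast
  with False tight(1) show ?thesis by simp
qed

end
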